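(* Let $H$ and $H'$ be hypergraphs. If $H'$ dilutes to $H$ (i.e., $H$ is a hypergraph dilution of $H'$), then $\mathrm{ghw}(H) \leq \mathrm{ghw}(H')$.
   Context: A hypergraph $H$ is a pair $(V(H),E(H))$ with $E(H)\subseteq 2^{V(H)}$ a set of hyperedges (so identical edges coincide). For a vertex $v$, $I_v$ denotes the set of edges containing $v$. A hypergraph $H$ is a hypergraph dilution of $H'$ (equivalently, $H'$ dilutes to $H$) if $H$ is isomorphic to a hypergraph reachable from $H'$ by a finite sequence of the following operations: (1) deleting a vertex (from the vertex set and from all edges); (2) deleting an edge that is a proper subset of another edge; (3) merging on a vertex $v$: replacing all edges in $I_v$ by the single new edge $(\bigcup I_v)\setminus\{v\}$. A tree decomposition of $H$ is a pair $(T,(B_u)_{u\in T})$ with $T$ a tree and $B_u\subseteq V(H)$ such that every edge of $H$ is contained in some $B_u$ and for every vertex $v$ the set $\{u : v\in B_u\}$ is connected in $T$. For $B\subseteq V(H)$, $\rho_H(B)$ is the minimum number of edges of $H$ whose union contains $B$. The generalised hypertree width $\mathrm{ghw}(H)$ is the minimum over all tree decompositions of $\max_u \rho_H(B_u)$. *)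

theory Defs
  imports Main "HOL-Library.Extended_Nat"
begin

type_synonym 'a hypergraph = "'a set \<times> 'a set set"

definition verts :: "'a hypergraph \<Rightarrow> 'a set" where "verts H = fst H"
definition edges :: "'a hypergraph \<Rightarrow> 'a set set" where "edges H = snd H"

definition hypergraph :: "'a hypergraph \<Rightarrow> bool" where
  "hypergraph H \<longleftrightarrow> finite (verts H) \<and> (\<forall>e\<in>edges H. e \<subseteq> verts H)"

definition incident :: "'a hypergraph \<Rightarrow> 'a \<Rightarrow> 'a set set" where
  "incident H v = {e \<in> edges H. v \<in> e}"

inductive dilute_step :: "'a hypergraph \<Rightarrow> 'a hypergraph \<Rightarrow> bool" where
  del_vertex: "v \<in> verts H \<Longrightarrow>
     dilute_step H (verts H - {v}, (\<lambda>e. e - {v}) ` edges H)"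
| del_edge: "e \<in> edges H \<Longrightarrow> f \<in> edges H \<Longrightarrow> e \<subset> f \<Longrightarrow>
     dilute_step H (verts H, edges H - {e})"
| merge: "v \<in> verts H \<Longrightarrow>
     dilute_step H (verts H, (edges H - incident H v) \<union> {\<Union>(incident H v) - {v}})"

definition hg_iso :: "'a hypergraph \<Rightarrow> 'b hypergraph \<Rightarrow> bool" where
  "hg_iso H G \<longleftrightarrow> (\<exists>f. bij_betw f (verts H) (verts G) \<and> edges G = (\<lambda>e. f ` e) ` edges H)"

definition dilution :: "'a hypergraph \<Rightarrow> 'b hypergraph \<Rightarrow> bool" where
  "dilution H H' \<longleftrightarrow> (\<exists>G. dilute_step\<^sup>*\<^sup>* H' G \<and> hg_iso H G)"

definition adj :: "nat set set \<Rightarrow> nat \<Rightarrow> nat \<Rightarrow> bool" where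
  "adj TE x y \<longleftrightarrow> {x, y} \<in> TE \<and> x \<noteq> y"

definition connected_on :: "nat set set \<Rightarrow> nat set \<Rightarrow> bool" where
  "connected_on TE S \<longleftrightarrow>
     (\<forall>x\<in>S. \<forall>y\<in>S. (\<lambda>a b. a \<in> S \<and> b \<in> S \<and> adj TE a b)\<^sup>*\<^sup>* x y)"

definition has_cycle :: "nat set set \<Rightarrow> bool" where
  "has_cycle TE \<longleftrightarrow> (\<exists>cs. length cs \<ge> 3 \<and> distinct cs \<and>
      (\<forall>i. Suc i < length cs \<longrightarrow> adj TE (cs ! i) (cs ! Suc i)) \<and>
      adj TE (last cs) (hd cs))"

definition is_tree :: "nat set \<Rightarrow> nat set set \<Rightarrow> bool" where
  "is_tree N TE \<longleftrightarrow> finite N \<and> N \<noteq> {} \<and>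
     (\<forall>e\<in>TE. \<exists>x y. x \<in> N \<and> y \<in> N \<and> x \<noteq> y \<and> e = {x, y}) \<and>
     connected_on TE N \<and> \<not> has_cycle TE"

definition tree_decomposition ::
  "'a hypergraph \<Rightarrow> nat set \<Rightarrow> nat set set \<Rightarrow> (nat \<Rightarrow> 'a set) \<Rightarrow> bool" where
  "tree_decomposition H N TE B \<longleftrightarrow> is_tree N TE \<and>
     (\<forall>u\<in>N. B u \<subseteq> verts H) \<and>
     (\<forall>e\<in>edges H. \<exists>u\<in>N. e \<subseteq> B u) \<and>
     (\<forall>v\<in>verts H. connected_on TE {u \<in> N. v \<in> B u})"

(* rho_H(X): minimum number of edges covering X (infinity if impossible) *)
definition rho :: "'a hypergraph \<Rightarrow> 'a set \<Rightarrow> enat" where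
  "rho H X = (INF F \<in> {F. F \<subseteq> edges H \<and> finite F \<and> X \<subseteq> \<Union>F}. enat (card F))"

definition ghw :: "'a hypergraph \<Rightarrow> enat" where
  "ghw H = (INF D \<in> {(N, TE, B). tree_decomposition H N TE B}.
              (case D of (N, TE, B) \<Rightarrow> (SUP u \<in> N. rho H (B u))))"

end

theory Submission
  imports Defs
begin

text \<open>Each dilution step, and the final isomorphism, turns an arbitrary tree decomposition of
  the larger hypergraph into one of the smaller hypergraph on the same tree, bag by bag. The
  new bags never cost more edges: an edge map sends every edge cover of an old bag to an edge
  cover of the new bag with at most as many edges. Deleting the vertex v deletes it from
  the bags; deleting an edge contained in f reroutes it to f; merging on v replaces v by the merged
  edge in every bag containing v (these bags form a subtree, and every cover of such a bag uses an
  edge through v, which is sent to the merged edge); an isomorphism pulls bags back.\<close>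

lemma ghw_le_if_decompositions_transfer:
  assumes "\<And>N TE B. tree_decomposition H' N TE B \<Longrightarrow>
     \<exists>B2. tree_decomposition H N TE B2 \<and> (\<forall>u\<in>N. rho H (B2 u) \<le> rho H' (B u))"
  shows "ghw H \<le> ghw H'"
  unfolding ghw_def
proof (rule INF_mono, clarify)
  fix N TE B assume "tree_decomposition H' N TE B"
  then obtain B2 where td: "tree_decomposition H N TE B2"
    and le: "\<forall>u\<in>N. rho H (B2 u) \<le> rho H' (B u)"
    using assms by blast
  have "(SUP u\<in>N. rho H (B2 u)) \<le> (SUP u\<in>N. rho H' (B u))"
    using le by (blast intro: SUP_mono)
  with td show "\<exists>D\<in>{(N, TE, B). tree_decomposition H N TE B}.
      (case D of (N, TE, B) \<Rightarrow> SUP u\<in>N. rho H (B u)) \<le> (SUP u\<in>N. rho H' (B u))"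
    by (intro bexI[of _ "(N, TE, B2)"]) auto
qed

lemma rho_le_edge_map:
  assumes "\<phi> ` edges H' \<subseteq> edges H"
    and "\<And>F. F \<subseteq> edges H' \<Longrightarrow> Y \<subseteq> \<Union>F \<Longrightarrow> X \<subseteq> \<Union>(\<phi> ` F)"
  shows "rho H X \<le> rho H' Y"
  unfolding rho_def
proof (rule INF_mono, clarify)
  fix F assume F: "F \<subseteq> edges H'" "finite F" "Y \<subseteq> \<Union>F"
  then have "\<phi> ` F \<in> {F. F \<subseteq> edges H \<and> finite F \<and> X \<subseteq> \<Union>F}"
    using assms by auto
  moreover have "enat (card (\<phi> ` F)) \<le> enat (card F)"
    using card_image_le[OF F(2)] by simp
  ultimately show "\<exists>F2\<in>{F. F \<subseteq> edges H \<and> finite F \<and> X \<subseteq> \<Union>F}. enat (card F2) \<le> enat (card F)"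
    by blast
qed

lemma connected_on_empty: "connected_on TE {}"
  by (simp add: connected_on_def)

lemma connected_on_Un:
  assumes "connected_on TE S" "connected_on TE T" "w \<in> S" "w \<in> T"
  shows "connected_on TE (S \<union> T)"
  unfolding connected_on_def
proof (intro ballI)
  let ?R = "\<lambda>a b. a \<in> S \<union> T \<and> b \<in> S \<union> T \<and> adj TE a b"
  have "?R\<^sup>*\<^sup>* a b" if "a \<in> S \<and> b \<in> S \<or> a \<in> T \<and> b \<in> T" for a b
  proof -
    have "(\<lambda>a b. a \<in> S \<and> b \<in> S \<and> adj TE a b) \<le> ?R"
      and "(\<lambda>a b. a \<in> T \<and> b \<in> T \<and> adj TE a b) \<le> ?R"
      by auto
    then show ?thesis
      using that assms(1,2) rtranclp_mono unfolding connected_on_def by blast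
  qed
  then show "?R\<^sup>*\<^sup>* x y" if "x \<in> S \<union> T" "y \<in> S \<union> T" for x y
    using that assms(3,4) rtranclp_trans[of ?R x w y] by blast
qed

lemma hypergraph_dilute_step:
  "dilute_step H G \<Longrightarrow> hypergraph H \<Longrightarrow> hypergraph G"
  by (induction rule: dilute_step.induct)
     (auto simp: hypergraph_def verts_def edges_def incident_def)

lemma ghw_del_vertex_le:
  "ghw (verts H' - {v}, (\<lambda>e. e - {v}) ` edges H') \<le> ghw H'"
    (is "ghw ?G \<le> _")
proof (rule ghw_le_if_decompositions_transfer)
  fix N TE B assume td: "tree_decomposition H' N TE B"
  have "tree_decomposition ?G N TE (\<lambda>u. B u - {v})"
    unfolding tree_decomposition_def
  proof (intro conjI ballI)
    fix w assume "w \<in> verts ?G"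
    then have "{u \<in> N. w \<in> B u - {v}} = {u \<in> N. w \<in> B u}" "w \<in> verts H'"
      by (auto simp: verts_def)
    then show "connected_on TE {u \<in> N. w \<in> B u - {v}}"
      using td by (simp add: tree_decomposition_def)
  qed (use td in \<open>fastforce simp: tree_decomposition_def verts_def edges_def\<close>)+
  moreover have "rho ?G (B u - {v}) \<le> rho H' (B u)" for u
    by (rule rho_le_edge_map[where \<phi> = "\<lambda>e. e - {v}"]) (auto simp: edges_def)
  ultimately show "\<exists>B2. tree_decomposition ?G N TE B2 \<and> (\<forall>u\<in>N. rho ?G (B2 u) \<le> rho H' (B u))"
    by blast
qed

lemma ghw_del_edge_le:
  assumes "f \<in> edges H'" "e \<subset> f"
  shows "ghw (verts H', edges H' - {e}) \<le> ghw H'"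
    (is "ghw ?G \<le> _")
proof (rule ghw_le_if_decompositions_transfer)
  fix N TE B assume "tree_decomposition H' N TE B"
  then have "tree_decomposition ?G N TE B"
    by (auto simp: tree_decomposition_def verts_def edges_def)
  moreover have "rho ?G (B u) \<le> rho H' (B u)" for u
    by (rule rho_le_edge_map[where \<phi> = "\<lambda>x. if x = e then f else x"])
       (use assms in \<open>auto simp: edges_def\<close>)
  ultimately show "\<exists>B2. tree_decomposition ?G N TE B2 \<and> (\<forall>u\<in>N. rho ?G (B2 u) \<le> rho H' (B u))"
    by blast
qed

lemma tree_decomposition_merge:
  fixes v :: 'a
  assumes "hypergraph H'" "tree_decomposition H' N TE B"
  defines "m \<equiv> \<Union>(incident H' v) - {v}"
  shows "tree_decomposition (verts H', (edges H' - incident H' v) \<union> {m}) N TE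
           (\<lambda>u. if v \<in> B u then B u - {v} \<union> m else B u)"
    (is "tree_decomposition ?G N TE ?B2")
  unfolding tree_decomposition_def
proof (intro conjI ballI)
  have tree: "is_tree N TE" and cov: "\<forall>e\<in>edges H'. \<exists>u\<in>N. e \<subseteq> B u"
    and con: "\<forall>w\<in>verts H'. connected_on TE {u \<in> N. w \<in> B u}"
    and bags: "\<forall>u\<in>N. B u \<subseteq> verts H'"
    using assms(2) by (auto simp: tree_decomposition_def)
  show "is_tree N TE" by (fact tree)
  show "?B2 u \<subseteq> verts ?G" if "u \<in> N" for u
    using that bags assms(1) by (auto simp: m_def hypergraph_def incident_def verts_def)
  have m_covered: "\<exists>u\<in>N. v \<in> B u \<and> e \<subseteq> B u" if "e \<in> incident H' v" for e
    using that cov by (auto simp: incident_def)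
  show "\<exists>u\<in>N. e \<subseteq> ?B2 u" if "e \<in> edges ?G" for e
  proof (cases "e = m")
    case True
    with m_covered tree show ?thesis
      by (cases "incident H' v = {}") (auto simp: m_def is_tree_def)
  next
    case False
    with that cov show ?thesis by (fastforce simp: edges_def incident_def)
  qed
  show "connected_on TE {u \<in> N. w \<in> ?B2 u}" if "w \<in> verts ?G" for w
  proof -
    have w: "w \<in> verts H'" using that by (simp add: verts_def)
    consider "w = v" | "w \<noteq> v" "w \<in> m" | "w \<noteq> v" "w \<notin> m" by blast
    then show ?thesis
    proof cases
      case 1
      then have "{u \<in> N. w \<in> ?B2 u} = {}" by (auto simp: m_def)
      then show ?thesis by (metis connected_on_empty)
    next
      case 2
      \<comment> \<open>the bag of an edge through both w and v joins the subtrees of w and of v\<close>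
      then obtain e where "e \<in> incident H' v" "w \<in> e" by (auto simp: m_def)
      with m_covered obtain u0 where "u0 \<in> N" "v \<in> B u0" "w \<in> B u0" by blast
      moreover have "{u \<in> N. w \<in> ?B2 u} = {u \<in> N. w \<in> B u} \<union> {u \<in> N. v \<in> B u}"
        using 2 by auto
      ultimately show ?thesis
        using con w bags by (auto intro!: connected_on_Un[where w = u0])
    next
      case 3
      then have "{u \<in> N. w \<in> ?B2 u} = {u \<in> N. w \<in> B u}" by auto
      with con w show ?thesis by simp
    qed
  qed
qed

lemma ghw_merge_le:
  assumes "hypergraph H'"
  shows "ghw (verts H', (edges H' - incident H' v) \<union> {\<Union>(incident H' v) - {v}}) \<le> ghw H'"
    (is "ghw ?G \<le> _")
proof (rule ghw_le_if_decompositions_transfer)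
  let ?m = "\<Union>(incident H' v) - {v}"
  let ?B2 = "\<lambda>B u. if v \<in> B u then B u - {v} \<union> ?m else B u"
  fix N TE B assume "tree_decomposition H' N TE B"
  then have "tree_decomposition ?G N TE (?B2 B)"
    by (rule tree_decomposition_merge[OF assms])
  moreover have "rho ?G (?B2 B u) \<le> rho H' (B u)" for u
  proof (rule rho_le_edge_map[where \<phi> = "\<lambda>e. if v \<in> e then ?m else e"])
    show "(\<lambda>e. if v \<in> e then ?m else e) ` edges H' \<subseteq> edges ?G"
      by (auto simp: edges_def incident_def)
    fix F assume F: "F \<subseteq> edges H'" "B u \<subseteq> \<Union>F"
    define F2 where "F2 = (\<lambda>e. if v \<in> e then ?m else e) ` F"
    have "x \<in> \<Union>F2" if x: "x \<in> B u" "x \<noteq> v" for x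
    proof -
      obtain e where "e \<in> F" "x \<in> e" using F x by blast
      with F x show ?thesis by (cases "v \<in> e") (auto simp: F2_def incident_def)
    qed
    moreover have "?m \<subseteq> \<Union>F2" if v: "v \<in> B u"
    proof -
      obtain e where "e \<in> F" "v \<in> e" using F v by blast
      then have "?m \<in> F2" using rev_image_eqI[of e F ?m] by (simp add: F2_def)
      then show ?thesis by (rule Union_upper)
    qed
    ultimately have "?B2 B u \<subseteq> \<Union>F2" by (cases "v \<in> B u") (simp_all, blast+)
    then show "?B2 B u \<subseteq> \<Union>((\<lambda>e. if v \<in> e then ?m else e) ` F)" by (simp only: F2_def)
  qed
  ultimately show "\<exists>B2. tree_decomposition ?G N TE B2 \<and> (\<forall>u\<in>N. rho ?G (B2 u) \<le> rho H' (B u))"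
    by blast
qed

lemma ghw_dilute_step_le:
  "dilute_step H' G \<Longrightarrow> hypergraph H' \<Longrightarrow> ghw G \<le> ghw H'"
proof (induction rule: dilute_step.induct)
  case del_vertex
  show ?case by (rule ghw_del_vertex_le)
next
  case del_edge
  then show ?case by (blast intro: ghw_del_edge_le)
next
  case merge
  then show ?case by (blast intro: ghw_merge_le)
qed

lemma ghw_dilute_steps_le:
  assumes "dilute_step\<^sup>*\<^sup>* H' G" "hypergraph H'"
  shows "ghw G \<le> ghw H' \<and> hypergraph G"
  using assms(1)
proof (induction rule: rtranclp_induct)
  case (step G G')
  then show ?case
    using ghw_dilute_step_le hypergraph_dilute_step order_trans by blast
qed (simp add: assms(2))

lemma ghw_iso_le:
  assumes "hg_iso H G" "hypergraph H"
  shows "ghw H \<le> ghw G"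
proof (rule ghw_le_if_decompositions_transfer)
  obtain f where f: "bij_betw f (verts H) (verts G)"
    and edges_G: "edges G = (\<lambda>e. f ` e) ` edges H"
    using assms(1) by (auto simp: hg_iso_def)
  have inj: "inj_on f (verts H)" using f by (simp add: bij_betw_def)
  define pre where "pre Y = {x \<in> verts H. f x \<in> Y}" for Y
  have pre_image: "pre (f ` e) = e" if "e \<in> edges H" for e
    using that assms(2) inj_on_image_mem_iff[OF inj]
    by (auto simp: pre_def hypergraph_def)
  fix N TE B assume td: "tree_decomposition G N TE B"
  have "tree_decomposition H N TE (\<lambda>u. pre (B u))"
    unfolding tree_decomposition_def
  proof (intro conjI ballI)
    show "is_tree N TE" using td by (simp add: tree_decomposition_def)
    show "pre (B u) \<subseteq> verts H" for u by (auto simp: pre_def)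
    show "\<exists>u\<in>N. e \<subseteq> pre (B u)" if e: "e \<in> edges H" for e
    proof -
      obtain u where "u \<in> N" "f ` e \<subseteq> B u"
        using td e edges_G by (auto simp: tree_decomposition_def)
      then show ?thesis
        using pre_image[OF e] by (auto simp: pre_def)
    qed
    show "connected_on TE {u \<in> N. w \<in> pre (B u)}" if "w \<in> verts H" for w
      using td that bij_betwE[OF f] by (auto simp: tree_decomposition_def pre_def)
  qed
  moreover have "rho H (pre (B u)) \<le> rho G (B u)" for u
    by (rule rho_le_edge_map[where \<phi> = pre]) (auto simp: edges_G pre_image, auto simp: pre_def)
  ultimately show "\<exists>B2. tree_decomposition H N TE B2 \<and> (\<forall>u\<in>N. rho H (B2 u) \<le> rho G (B u))"
    by blast
qed

theorem theorem3p2: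
  fixes H :: "'a hypergraph" and H' :: "'b hypergraph"
  assumes "hypergraph H" and "hypergraph H'"
    and "dilution H H'"
  shows "ghw H \<le> ghw H'"
proof -
  obtain G where "dilute_step\<^sup>*\<^sup>* H' G" "hg_iso H G"
    using assms(3) by (auto simp: dilution_def)
  then have "ghw H \<le> ghw G" "ghw G \<le> ghw H'"
    using ghw_iso_le ghw_dilute_steps_le assms(1,2) by blast+
  then show ?thesis by (rule order_trans)
qed

end
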